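(* Let $\rho$ be a Borel probability measure on $\mathsf{X}$ and let $X$ be the process on $\mathsf{X}$ constructed from $\rho$ as in the context. Then $\hat{X}:=\pi\circ X$ is a pure jump-type continuous-time Markov process on $\hat{\mathsf{X}}=\{0,1,\dots,n\}$ with rate kernel $\hat{\alpha}$ and initial distribution $\rho\circ\pi^{-1}$.
   Context: Fix $\theta_a,\theta_d>0$, positive integers $n,N$, $E=\mathbb{R}^N$, and a Borel probability measure $\eta$ on $E$ with finite mean. $[k]=\{0,\dots,k-1\}$; $|\psi|=\sum_{i\in[n]}\psi(i)$. State space: $\mathsf{X}=\{(\psi,\mathbf{v})\in\{0,1\}^{[n]}\times E^{[n+1]}:\sum_{i\in[n]}\psi(i)(\mathbf{v}(i)-\mathbf{v}(n))=0\}$ (subspace of the product topology, discrete on $\{0,1\}$, Euclidean on $E$). $\pi(\psi,\mathbf{v})=|\psi|\in\hat{\mathsf{X}}=\{0,\dots,n\}$. For $i\in[n]$: $r_i(\psi)=\frac{\theta_d\psi(i)+\theta_a(1-\psi(i))}{\theta_d|\psi|+\theta_a(n-|\psi|)}$; $s_i(\psi)$ agrees with $\psi$ except at $i$, where $s_i(\psi)(i)=1-\psi(i)$. For $\mathsf{x}=(\psi,\mathbf{v})\in\mathsf{X}$, $\lambda_i^{\mathsf{x}}$ is the law of $(s_i(\psi),\mathbf{w})$ with $\mathbf{w}(j)=\mathbf{v}(j)$ for $j\in[n]\setminus\{i\}$ and $(\mathbf{w}(i),\mathbf{w}(n))$ equal to $(\mathbf{v}(i),\mathbf{v}(n))$ if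 $|\psi|=\psi(i)=1$; $(\mathbf{v}(i),\mathbf{v}(n)-\frac{\mathbf{v}(i)-\mathbf{v}(n)}{|\psi|-1})$ if $|\psi|>\psi(i)=1$; $(\mathbf{x}+\mathbf{v}(n),\frac{\mathbf{x}}{|\psi|+1}+\mathbf{v}(n))$ with $\mathbf{x}\sim\eta$ if $\psi(i)=0$. $\mu(\mathsf{x},B)=\sum_{i\in[n]}r_i(\psi)\lambda_i^{\mathsf{x}}(B)$; $c(\psi,\mathbf{v})=\theta_d|\psi|+\theta_a(n-|\psi|)$. On $\hat{\mathsf{X}}$: $\hat{\mu}(i,\cdot)=\frac{\theta_d i\,\delta_{i-1}+\theta_a(n-i)\,\delta_{i+1}}{\theta_d i+\theta_a(n-i)}$, $\hat{c}(i)=\theta_d i+\theta_a(n-i)$, $\hat{\alpha}(i,B)=\hat{c}(i)\hat{\mu}(i,B)$. Construction of $X$: $Y$ is a discrete-time Markov chain on $\mathsf{X}$ with transition kernel $\mu$ and $Y_0\sim\rho$; $(\gamma_k)_{k\ge1}$ i.i.d. standard exponential with $\{Y,\gamma_1,\gamma_2,\dots\}$ independent; $\tau_k=\sum_{i=1}^k\gamma_i/c(Y_{i-1})$; $X_t=Y_k$ for $t\in[\tau_k,\tau_{k+1})$. A pure jump-type continuous-time Markov process with rate kernel $\hat\alpha$ is a Markov process with right-continuous piecewise constant paths that holds in state $i$ for an exponential time of rate $\hat c(i)$ and then jumps according to $\hat\mu(i,\cdot)$. *)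

theory Defs
  imports "HOL-Probability.Probability"
begin

text \<open>States: pairs (psi, v) with psi :: nat => bool (only indices < n are relevant,
  the others are fixed to False) and v :: nat => E (only indices <= n relevant, the
  others fixed to 0), E = real^'N.  The coordinates outside the index ranges are frozen,
  so the state space below is homeomorphic to the subspace of
  {0,1}^[n] x E^[n+1] from the paper.\<close>

type_synonym 'N state = "(nat \<Rightarrow> bool) \<times> (nat \<Rightarrow> real ^ 'N)"

definition card_psi :: "nat \<Rightarrow> (nat \<Rightarrow> bool) \<Rightarrow> nat" where
  "card_psi n psi = card {i. i < n \<and> psi i}"

definition Xset :: "nat \<Rightarrow> ('N::finite) state set" where
  "Xset n = {(psi, v). (\<forall>i\<ge>n. \<not> psi i) \<and> (\<forall>i>n. v i = 0) \<and>
      (\<Sum>i<n. of_bool (psi i) *\<^sub>R (v i - v n)) = 0}"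

definition Xspace :: "nat \<Rightarrow> ('N::finite) state measure" where
  "Xspace n = restrict_space borel (Xset n)"

definition proj :: "nat \<Rightarrow> ('N::finite) state \<Rightarrow> nat" where
  "proj n x = card_psi n (fst x)"

definition rate_c :: "nat \<Rightarrow> real \<Rightarrow> real \<Rightarrow> (nat \<Rightarrow> bool) \<Rightarrow> real" where
  "rate_c n ta td psi = td * real (card_psi n psi) + ta * real (n - card_psi n psi)"

definition r_i :: "nat \<Rightarrow> real \<Rightarrow> real \<Rightarrow> nat \<Rightarrow> (nat \<Rightarrow> bool) \<Rightarrow> real" where
  "r_i n ta td i psi = (td * of_bool (psi i) + ta * (1 - of_bool (psi i))) / rate_c n ta td psi"

definition s_i :: "nat \<Rightarrow> (nat \<Rightarrow> bool) \<Rightarrow> (nat \<Rightarrow> bool)" where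
  "s_i i psi = psi(i := \<not> psi i)"

definition lam :: "nat \<Rightarrow> (real ^ ('N::finite)) measure \<Rightarrow> ('N::finite) state \<Rightarrow> nat \<Rightarrow> ('N::finite) state measure" where
  "lam n eta x i = (case x of (psi, v) \<Rightarrow>
     (if psi i then
        (if card_psi n psi = 1 then return (Xspace n) (s_i i psi, v)
         else return (Xspace n) (s_i i psi,
                v(n := v n - (1 / (real (card_psi n psi) - 1)) *\<^sub>R (v i - v n))))
      else distr eta (Xspace n) (\<lambda>y. (s_i i psi,
                v(i := y + v n, n := (1 / (real (card_psi n psi) + 1)) *\<^sub>R y + v n)))))"

definition mu :: "nat \<Rightarrow> real \<Rightarrow> real \<Rightarrow> (real ^ ('N::finite)) measure \<Rightarrow> ('N::finite) state \<Rightarrow> ('N::finite) state set \<Rightarrow> real" where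
  "mu n ta td eta x B = (\<Sum>i<n. r_i n ta td i (fst x) * measure (lam n eta x i) B)"

definition hat_c :: "nat \<Rightarrow> real \<Rightarrow> real \<Rightarrow> nat \<Rightarrow> real" where
  "hat_c n ta td i = td * real i + ta * real (n - i)"

definition hat_mu :: "nat \<Rightarrow> real \<Rightarrow> real \<Rightarrow> nat \<Rightarrow> nat set \<Rightarrow> real" where
  "hat_mu n ta td i B = (td * real i * indicator B (i - 1) + ta * real (n - i) * indicator B (i + 1))
                        / (td * real i + ta * real (n - i))"

definition hat_alpha :: "nat \<Rightarrow> real \<Rightarrow> real \<Rightarrow> nat \<Rightarrow> nat set \<Rightarrow> real" where
  "hat_alpha n ta td i B = hat_c n ta td i * hat_mu n ta td i B"

definition markov_chain ::
  "'w measure \<Rightarrow> 'a measure \<Rightarrow> ('a \<Rightarrow> 'a set \<Rightarrow> real) \<Rightarrow> 'a measure \<Rightarrow> (nat \<Rightarrow> 'w \<Rightarrow> 'a) \<Rightarrow> bool" where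
  "markov_chain M S K rho Y \<longleftrightarrow>
     (\<forall>k. Y k \<in> measurable M S) \<and> distr M S (Y 0) = rho \<and>
     (\<forall>k B. (\<forall>j\<le>Suc k. B j \<in> sets S) \<longrightarrow>
        measure M {\<omega> \<in> space M. \<forall>j\<le>Suc k. Y j \<omega> \<in> B j} =
        (\<integral>\<omega>. indicator {\<omega> \<in> space M. \<forall>j\<le>k. Y j \<omega> \<in> B j} \<omega> * K (Y k \<omega>) (B (Suc k)) \<partial>M))"

text \<open>Jump times tau_k = sum_(i=1..k) gamma_i / c(Y_(i-1)) (gamma indexed from 1).\<close>
definition jump_time :: "nat \<Rightarrow> real \<Rightarrow> real \<Rightarrow> (nat \<Rightarrow> 'w \<Rightarrow> ('N::finite) state) \<Rightarrow> (nat \<Rightarrow> 'w \<Rightarrow> real)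
    \<Rightarrow> nat \<Rightarrow> 'w \<Rightarrow> real" where
  "jump_time n ta td Y \<gamma> k \<omega> = (\<Sum>i=1..k. \<gamma> i \<omega> / rate_c n ta td (fst (Y (i - 1) \<omega>)))"

text \<open>X_t = Y_k for t in [tau_k, tau_(k+1)).  On the null event where the jump times do not
  exhaust [0,infinity) (explosion) the process is not defined in the paper; we set X_t := Y_0
  there (an arbitrary convention that does not affect any law).\<close>
definition Xproc :: "nat \<Rightarrow> real \<Rightarrow> real \<Rightarrow> (nat \<Rightarrow> 'w \<Rightarrow> ('N::finite) state) \<Rightarrow> (nat \<Rightarrow> 'w \<Rightarrow> real)
    \<Rightarrow> real \<Rightarrow> 'w \<Rightarrow> ('N::finite) state" where
  "Xproc n ta td Y \<gamma> t \<omega> =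
     (let \<tau> = (\<lambda>k. jump_time n ta td Y \<gamma> k \<omega>) in
      if \<exists>k. t < \<tau> (Suc k) then Y (LEAST k. t < \<tau> (Suc k)) \<omega> else Y 0 \<omega>)"

text \<open>Z (indexed by t >= 0) is a pure jump-type continuous-time Markov process on the
  countable state set S with rate kernel alpha and initial distribution nu
  (jump chain / holding time description; holding rate c(i) = alpha(i,S),
  jump distribution alpha(i,{j}) / c(i)): almost surely the paths are right-continuous
  and piecewise constant, with jump times 0 = J_0 < J_1 < ... tending to infinity, and
  the jump chain and holding times have the joint law
  P(Z_(J_0)=i_0,...,Z_(J_k)=i_k, J_1-J_0 > s_0, ..., J_k - J_(k-1) > s_(k-1))
    = nu{i_0} * prod_(j<k) (alpha(i_j,{i_(j+1)})/c(i_j)) * exp(-c(i_j) s_j),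
  i.e. the process holds in state i for an Exp(c(i)) time, independently of the past,
  then jumps according to alpha(i,.)/c(i).  (This description is intended for kernels
  without absorbing states and without self-jumps, which is the case here.)\<close>
definition pure_jump_markov ::
  "'w measure \<Rightarrow> (real \<Rightarrow> 'w \<Rightarrow> nat) \<Rightarrow> nat set \<Rightarrow> (nat \<Rightarrow> nat set \<Rightarrow> real) \<Rightarrow> nat measure \<Rightarrow> bool" where
  "pure_jump_markov M Z S alpha nu \<longleftrightarrow>
     prob_space M \<and> (\<forall>t\<ge>0. Z t \<in> measurable M (count_space S)) \<and>
     (\<exists>J :: nat \<Rightarrow> 'w \<Rightarrow> real. (\<forall>k. J k \<in> borel_measurable M) \<and>
        (AE \<omega> in M. J 0 \<omega> = 0 \<and> (\<forall>k. J k \<omega> < J (Suc k) \<omega>) \<and>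
           filterlim (\<lambda>k. J k \<omega>) at_top sequentially \<and>
           (\<forall>k t. J k \<omega> \<le> t \<and> t < J (Suc k) \<omega> \<longrightarrow> Z t \<omega> = Z (J k \<omega>) \<omega>) \<and>
           (\<forall>k. Z (J (Suc k) \<omega>) \<omega> \<noteq> Z (J k \<omega>) \<omega>)) \<and>
        (\<forall>k (i :: nat \<Rightarrow> nat) (s :: nat \<Rightarrow> real). (\<forall>j\<le>k. i j \<in> S) \<longrightarrow> (\<forall>j. 0 \<le> s j) \<longrightarrow>
           measure M {\<omega> \<in> space M. (\<forall>j\<le>k. Z (J j \<omega>) \<omega> = i j) \<and>
                                    (\<forall>j<k. J (Suc j) \<omega> - J j \<omega> > s j)}
           = measure nu {i 0} *
             (\<Prod>j<k. (alpha (i j) {i (Suc j)} / alpha (i j) S) * exp (- alpha (i j) S * s j))))"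

end

theory Submission
  imports Defs
begin

text \<open>
  The kernel \<open>mu\<close> is lumpable: flipping an active coordinate lowers \<open>|psi|\<close> by one, flipping
  an inactive one raises it by one, and the accompanying updates of \<open>v\<close> keep the state in
  \<open>X\<close>. So the probability of jumping into the fibre of \<open>C\<close> under \<open>proj\<close> depends on \<open>x\<close> only
  through \<open>proj x\<close> and equals \<open>hat_mu (proj x) C\<close>; hence \<open>proj \<circ> Y\<close> is a Markov chain with
  kernel \<open>hat_mu\<close> and initial law \<open>rho \<circ> proj\<^sup>-\<^sup>1\<close>, and it never stays put. The \<open>k\<close>-th holding
  time of \<open>X\<close> is \<open>\<gamma>\<^sub>k / hat_c (proj Y\<^sub>k\<^sub>-\<^sub>1)\<close>. The rates are bounded, so the jump times
  diverge almost surely, and the independence of \<open>Y\<close> from the exponential clocks factorises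
  the joint law of jump chain and holding times into \<open>hat_mu\<close>-transition probabilities
  times exponential tails \<open>exp (- hat_c s)\<close>.
\<close>

section \<open>Active coordinates and the state space\<close>

lemma card_psi_eq_sum: "card_psi n psi = (\<Sum>i<n. if psi i then 1 else 0)"
  unfolding card_psi_def by (simp add: sum.If_cases Int_def)

lemma real_card_psi: "real (card_psi n psi) = (\<Sum>i<n. of_bool (psi i))"
  unfolding card_psi_eq_sum by (simp add: of_bool_def if_distrib cong: if_cong)

lemma card_psi_le: "card_psi n psi \<le> n"
  unfolding card_psi_def by (rule order_trans[OF card_mono[of "{..<n}"]]) auto

lemma proj_le: "proj n x \<le> n"
  unfolding proj_def by (rule card_psi_le)

lemma card_inactive: "card {i. i < n \<and> \<not> psi i} = n - card_psi n psi"
proof -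
  have "{i. i < n \<and> \<not> psi i} = {..<n} - {i. i < n \<and> psi i}" by auto
  then show ?thesis unfolding card_psi_def by (simp only:) (subst card_Diff_subset, auto)
qed

lemma card_psi_s_i:
  assumes "i < n"
  shows "card_psi n (s_i i psi) = (if psi i then card_psi n psi - 1 else card_psi n psi + 1)"
proof (cases "psi i")
  case True
  then have "{j. j < n \<and> s_i i psi j} = {j. j < n \<and> psi j} - {i}" by (auto simp: s_i_def)
  then show ?thesis using True assms by (simp add: card_psi_def)
next
  case False
  then have "{j. j < n \<and> s_i i psi j} = insert i {j. j < n \<and> psi j}"
    using assms by (auto simp: s_i_def)
  then show ?thesis using False assms by (simp add: card_psi_def)
qed

text \<open>The constraint defining \<^const>\<open>Xset\<close> says that \<open>v n\<close> is the barycentre of the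
  active \<open>v i\<close>; the updates of \<^const>\<open>lam\<close> recompute this barycentre after coordinate
  \<open>i\<close> is deactivated or activated, so they never leave the state space.\<close>

lemma Xset_deactivate_last:
  assumes x: "(psi, v) \<in> Xset n" and i: "i < n" "psi i" and one: "card_psi n psi = 1"
  shows "(s_i i psi, v) \<in> Xset n"
proof -
  have "{j. j < n \<and> psi j} = {i}"
    using one i unfolding card_psi_def
    by (metis (mono_tags, lifting) card_1_singletonE mem_Collect_eq singletonD)
  then have "\<forall>j<n. \<not> s_i i psi j" by (auto simp: s_i_def)
  then show ?thesis using x i by (auto simp: Xset_def s_i_def)
qed

lemma Xset_deactivate:
  assumes x: "(psi, v) \<in> Xset n" and i: "i < n" "psi i" and not_one: "card_psi n psi \<noteq> 1"
  shows "(s_i i psi, v(n := v n - (1 / (real (card_psi n psi) - 1)) *\<^sub>R (v i - v n))) \<in> Xset n"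
proof -
  define m where "m = card_psi n psi"
  define b where "b = 1 / (real m - 1)"
  define v' where "v' = v(n := v n - b *\<^sub>R (v i - v n))"
  define R where "R = {..<n} - {i}"
  have "(\<Sum>j<n. of_bool (psi j) *\<^sub>R (v j - v n)) = 0" using x by (simp add: Xset_def)
  moreover have "(\<Sum>j<n. of_bool (psi j) *\<^sub>R (v j - v n)) =
      (v i - v n) + (\<Sum>j\<in>R. of_bool (psi j) *\<^sub>R (v j - v n))"
    using i by (simp add: R_def sum.remove del: sum_of_bool_eq)
  ultimately have sum_R: "(\<Sum>j\<in>R. of_bool (psi j) *\<^sub>R (v j - v n)) = - (v i - v n)"
    by (simp add: algebra_simps)
  have "real m = 1 + (\<Sum>j\<in>R. of_bool (psi j))"
    using i by (simp add: m_def R_def real_card_psi sum.remove del: sum_of_bool_eq)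
  then have card_R: "(\<Sum>j\<in>R. of_bool (psi j)) = real m - 1" by simp
  have "(\<Sum>j<n. of_bool (s_i i psi j) *\<^sub>R (v' j - v' n)) =
      (\<Sum>j\<in>R. of_bool (s_i i psi j) *\<^sub>R (v' j - v' n))"
    using i by (simp add: R_def sum.remove s_i_def)
  also have "\<dots> = (\<Sum>j\<in>R. of_bool (psi j) *\<^sub>R ((v j - v n) + b *\<^sub>R (v i - v n)))"
    by (rule sum.cong) (auto simp: R_def s_i_def v'_def algebra_simps)
  also have "\<dots> = (\<Sum>j\<in>R. of_bool (psi j) *\<^sub>R (v j - v n)) + (\<Sum>j\<in>R. of_bool (psi j)) *\<^sub>R b *\<^sub>R (v i - v n)"
    by (simp add: scaleR_add_right sum.distrib scaleR_sum_left sum_distrib_right del: sum_of_bool_eq sum_of_bool_mult_eq)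
  also have "\<dots> = ((real m - 1) * b - 1) *\<^sub>R (v i - v n)"
    by (simp only: sum_R card_R) (simp add: algebra_simps)
  also have "(real m - 1) * b - 1 = 0"
    using not_one by (simp add: b_def m_def field_simps)
  finally show ?thesis using x i unfolding Xset_def v'_def b_def m_def by (auto simp: s_i_def)
qed

lemma Xset_activate:
  assumes x: "(psi, v) \<in> Xset n" and i: "i < n" "\<not> psi i"
  shows "(s_i i psi, v(i := y + v n, n := (1 / (real (card_psi n psi) + 1)) *\<^sub>R y + v n)) \<in> Xset n"
proof -
  define m where "m = card_psi n psi"
  define a where "a = 1 / (real m + 1)"
  define v' where "v' = v(i := y + v n, n := a *\<^sub>R y + v n)"
  have "(\<Sum>j<n. of_bool (s_i i psi j) *\<^sub>R (v' j - v' n)) =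
      (1 - a) *\<^sub>R y + (\<Sum>j\<in>{..<n} - {i}. of_bool (s_i i psi j) *\<^sub>R (v' j - v' n))"
    using i by (simp add: sum.remove s_i_def v'_def algebra_simps)
  also have "(\<Sum>j\<in>{..<n} - {i}. of_bool (s_i i psi j) *\<^sub>R (v' j - v' n)) =
      (\<Sum>j\<in>{..<n} - {i}. of_bool (psi j) *\<^sub>R (v j - v n - a *\<^sub>R y))"
    by (rule sum.cong) (auto simp: s_i_def v'_def)
  also have "(\<Sum>j\<in>{..<n} - {i}. of_bool (psi j) *\<^sub>R (v j - v n - a *\<^sub>R y)) =
      (\<Sum>j<n. of_bool (psi j) *\<^sub>R (v j - v n)) - (\<Sum>j<n. of_bool (psi j)) *\<^sub>R a *\<^sub>R y"
    using i by (simp add: sum.remove scaleR_diff_right sum_subtractf scaleR_sum_left sum_distrib_right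
        del: sum_of_bool_eq sum_of_bool_mult_eq)
  also have "\<dots> = - (real m * a) *\<^sub>R y"
    using x by (simp add: Xset_def m_def real_card_psi)
  also have "(1 - a) *\<^sub>R y + - (real m * a) *\<^sub>R y = (1 - a - real m * a) *\<^sub>R y"
    by (simp add: algebra_simps)
  also have "1 - a - real m * a = 0" by (simp add: a_def field_simps)
  finally show ?thesis using x i unfolding Xset_def v'_def a_def m_def by (auto simp: s_i_def)
qed

section \<open>Lumpability of the jump kernel\<close>

lemma space_Xspace: "space (Xspace n) = Xset n"
  unfolding Xspace_def by (simp add: space_restrict_space space_borel)

lemma measurable_coordinate_psi [measurable]:
  "(\<lambda>x::('N::finite) state. fst x i) \<in> measurable borel (count_space UNIV)"
proof -
  have "continuous_on UNIV (\<lambda>x::('N::finite) state. fst x i)"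
    by (intro continuous_intros continuous_on_product_then_coordinatewise continuous_on_fst)
  then have "(\<lambda>x::('N::finite) state. fst x i) \<in> borel_measurable borel"
    by (rule borel_measurable_continuous_onI)
  then show ?thesis
    by (simp add: measurable_def sets_borel_eq_count_space)
qed

lemma measurable_proj [measurable]: "proj n \<in> measurable (Xspace n) (count_space UNIV)"
  unfolding Xspace_def proj_def card_psi_eq_sum
  by (intro measurable_restrict_space1 measurable_sum_nat) measurable

lemma lam_proj_preimage:
  assumes eta: "prob_space eta" "sets eta = sets borel"
    and x: "x \<in> Xset n" and i: "i < n"
  shows "measure (lam n eta x i) (proj n -` C \<inter> space (Xspace n))
    = indicator C (card_psi n (s_i i (fst x)))"
proof -
  obtain psi v where x_eq: "x = (psi, v)" by (cases x)
  let ?B = "proj n -` C \<inter> space (Xspace n)"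
  have B: "?B \<in> sets (Xspace n)" by measurable
  have return: "measure (return (Xspace n) y) ?B = indicator C (card_psi n (s_i i psi))"
    if "y \<in> Xset n" "fst y = s_i i psi" for y
    using that unfolding measure_return[OF B] by (simp add: space_Xspace proj_def indicator_def)
  consider "psi i" "card_psi n psi = 1" | "psi i" "card_psi n psi \<noteq> 1" | "\<not> psi i" by blast
  then show ?thesis
  proof cases
    case 1
    then show ?thesis using Xset_deactivate_last[OF x[unfolded x_eq] i]
      by (simp add: lam_def x_eq return)
  next
    case 2
    then show ?thesis using Xset_deactivate[OF x[unfolded x_eq] i]
      by (simp add: lam_def x_eq return)
  next
    case 3
    define f where "f y = (s_i i psi,
      v(i := y + v n, n := (1 / (real (card_psi n psi) + 1)) *\<^sub>R y + v n))" for y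
    have f_in: "f y \<in> Xset n" for y
      unfolding f_def using Xset_activate x i 3 x_eq by blast
    have "continuous_on UNIV f"
    proof -
      have "continuous_on UNIV (\<lambda>y. snd (f y) j)" for j
        by (cases "j = n"; cases "j = i") (auto simp: f_def intro!: continuous_intros)
      then show ?thesis unfolding f_def
        by (intro continuous_on_Pair continuous_on_const continuous_on_coordinatewise_then_product)
          (auto simp: f_def)
    qed
    then have "f \<in> borel_measurable borel" by (rule borel_measurable_continuous_onI)
    then have f: "f \<in> measurable eta (Xspace n)"
      unfolding Xspace_def measurable_cong_sets[OF eta(2) refl]
      using f_in by (intro measurable_restrict_space2) auto
    have space_eta: "space eta = UNIV"
      using sets_eq_imp_space_eq[OF eta(2)] by simp
    have "measure (lam n eta x i) ?B = measure eta (f -` ?B \<inter> space eta)"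
      using 3 by (simp add: lam_def x_eq f_def[abs_def] measure_distr[OF f[unfolded f_def] B])
    also have "f -` ?B \<inter> space eta = (if card_psi n (s_i i psi) \<in> C then UNIV else {})"
      using f_in space_eta by (auto simp: space_Xspace proj_def f_def)
    finally show ?thesis
      using prob_space.prob_space[OF eta(1)] space_eta by (simp add: x_eq indicator_def)
  qed
qed

lemma mu_lumpable:
  assumes eta: "prob_space eta" "sets eta = sets borel" and x: "x \<in> Xset n"
  shows "mu n ta td eta x (proj n -` C \<inter> space (Xspace n)) = hat_mu n ta td (proj n x) C"
proof -
  define psi where "psi = fst x"
  define m where "m = card_psi n psi"
  define R where "R = rate_c n ta td psi"
  have "mu n ta td eta x (proj n -` C \<inter> space (Xspace n)) =
      (\<Sum>i<n. r_i n ta td i psi * indicator C (card_psi n (s_i i psi)))"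
    unfolding mu_def psi_def using lam_proj_preimage[OF eta x] by simp
  also have "\<dots> = (\<Sum>i<n. if psi i then td / R * indicator C (m - 1) else ta / R * indicator C (m + 1))"
    by (rule sum.cong) (auto simp: r_i_def card_psi_s_i R_def m_def)
  also have "\<dots> = real (card {i. i < n \<and> psi i}) * (td / R * indicator C (m - 1))
       + real (card {i. i < n \<and> \<not> psi i}) * (ta / R * indicator C (m + 1))"
    by (simp add: sum.If_cases Int_def Collect_conj_eq[symmetric] lessThan_def Compl_eq
        del: sum_of_bool_eq)
  also have "\<dots> = hat_mu n ta td m C"
    unfolding card_inactive hat_mu_def R_def rate_c_def m_def[symmetric] card_psi_def[symmetric]
    by (simp add: field_simps add_divide_distrib)
  finally show ?thesis unfolding m_def psi_def proj_def .
qed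

lemma rate_c_eq_hat_c: "rate_c n ta td psi = hat_c n ta td (card_psi n psi)"
  unfolding rate_c_def hat_c_def ..

lemma hat_c_pos: "0 < n \<Longrightarrow> 0 < ta \<Longrightarrow> 0 < td \<Longrightarrow> 0 < hat_c n ta td m"
  unfolding hat_c_def by (cases "m = 0") (auto intro: add_pos_nonneg)

lemma hat_c_le:
  assumes "0 < ta" "0 < td" "m \<le> n"
  shows "hat_c n ta td m \<le> (ta + td) * real n"
proof -
  have "td * real m \<le> td * real n" "ta * real (n - m) \<le> ta * real n" using assms by auto
  then show ?thesis unfolding hat_c_def by (simp add: algebra_simps)
qed

lemma hat_mu_self: "hat_mu n ta td m {m} = 0"
  unfolding hat_mu_def by (cases m) auto

lemma hat_mu_total:
  assumes "0 < n" "0 < ta" "0 < td" "m \<le> n"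
  shows "hat_mu n ta td m {0..n} = 1"
proof -
  have "0 < td * real m + ta * real (n - m)"
    using hat_c_pos[OF assms(1-3)] by (simp add: hat_c_def)
  then show ?thesis
    using assms by (cases "m = n") (auto simp: hat_mu_def)
qed

section \<open>Jump times\<close>

lemma filterlim_at_top_frequent_increments:
  fixes \<tau> :: "nat \<Rightarrow> real"
  assumes mono: "mono \<tau>" and "0 < \<epsilon>" and frequent: "\<And>m. \<exists>i\<ge>m. \<tau> i + \<epsilon> \<le> \<tau> (Suc i)"
  shows "filterlim \<tau> at_top sequentially"
proof -
  have "\<exists>k. \<tau> 0 + real N * \<epsilon> \<le> \<tau> k" for N
  proof (induction N)
    case (Suc N)
    then obtain k where k: "\<tau> 0 + real N * \<epsilon> \<le> \<tau> k" by blast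
    obtain i where "k \<le> i" "\<tau> i + \<epsilon> \<le> \<tau> (Suc i)" using frequent by blast
    moreover have "\<tau> k \<le> \<tau> i" using mono \<open>k \<le> i\<close> by (rule monoD)
    ultimately show ?case using k by (intro exI[of _ "Suc i"]) (simp add: algebra_simps)
  qed auto
  note unbounded = this
  show ?thesis
    unfolding filterlim_at_top eventually_sequentially
  proof
    fix Z
    obtain N where "Z - \<tau> 0 < real N * \<epsilon>"
      using reals_Archimedean3[OF \<open>0 < \<epsilon>\<close>] by blast
    moreover obtain k where "\<tau> 0 + real N * \<epsilon> \<le> \<tau> k" using unbounded by blast
    ultimately have "Z \<le> \<tau> k" by simp
    then show "\<exists>k. \<forall>i\<ge>k. Z \<le> \<tau> i"
      by (auto intro: order_trans[OF _ monoD[OF mono]])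
  qed
qed

lemma jump_time_0 [simp]: "jump_time n ta td Y g 0 \<omega> = 0"
  by (simp add: jump_time_def)

lemma jump_time_Suc:
  "jump_time n ta td Y g (Suc k) \<omega> =
    jump_time n ta td Y g k \<omega> + g (Suc k) \<omega> / rate_c n ta td (fst (Y k \<omega>))"
  by (simp add: jump_time_def)

text \<open>Non-explosion: the rates are bounded by \<open>(ta + td) n\<close>, so every clock exceeding \<open>1\<close>
  advances the jump times by at least \<open>1 / ((ta + td) n)\<close>.\<close>

lemma jump_time_strict_mono_unbounded:
  assumes "0 < ta" "0 < td" "0 < n"
    and pos: "\<And>i. 1 \<le> i \<Longrightarrow> 0 < g i \<omega>" and frequent: "\<And>m. \<exists>i>m. 1 < g i \<omega>"
  shows "strict_mono (\<lambda>k. jump_time n ta td Y g k \<omega>)"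
    and "filterlim (\<lambda>k. jump_time n ta td Y g k \<omega>) at_top sequentially"
proof -
  define C where "C = (ta + td) * real n"
  have rate: "0 < rate_c n ta td psi" "rate_c n ta td psi \<le> C" for psi
    using hat_c_pos[of n ta td] hat_c_le[OF _ _ card_psi_le] assms(1-3)
    by (simp_all add: rate_c_eq_hat_c C_def)
  show mono: "strict_mono (\<lambda>k. jump_time n ta td Y g k \<omega>)"
    using pos rate(1) by (intro strict_monoI_Suc) (simp add: jump_time_Suc)
  show "filterlim (\<lambda>k. jump_time n ta td Y g k \<omega>) at_top sequentially"
  proof (rule filterlim_at_top_frequent_increments[OF strict_mono_mono[OF mono]])
    show "0 < 1 / C" using assms(1-3) by (simp add: C_def)
    fix m
    obtain i' where "m < i'" "1 < g i' \<omega>" using frequent by blast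
    then obtain i where "i' = Suc i" "m \<le> i" by (cases i') auto
    moreover have "1 / C \<le> 1 / rate_c n ta td (fst (Y i \<omega>))"
      using rate[of "fst (Y i \<omega>)"] by (intro divide_left_mono mult_pos_pos) auto
    moreover have "1 / rate_c n ta td (fst (Y i \<omega>)) \<le> g (Suc i) \<omega> / rate_c n ta td (fst (Y i \<omega>))"
      using rate[of "fst (Y i \<omega>)"] \<open>1 < g i' \<omega>\<close> \<open>i' = Suc i\<close> by (intro divide_right_mono) auto
    ultimately show "\<exists>i\<ge>m. jump_time n ta td Y g i \<omega> + 1 / C \<le> jump_time n ta td Y g (Suc i) \<omega>"
      by (auto simp: jump_time_Suc)
  qed
qed

lemma Xproc_eq_between_jumps:
  assumes mono: "mono (\<lambda>k. jump_time n ta td Y g k \<omega>)"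
    and t: "jump_time n ta td Y g k \<omega> \<le> t" "t < jump_time n ta td Y g (Suc k) \<omega>"
  shows "Xproc n ta td Y g t \<omega> = Y k \<omega>"
proof -
  have "(LEAST k'. t < jump_time n ta td Y g (Suc k') \<omega>) = k"
  proof (rule Least_equality)
    fix k' assume "t < jump_time n ta td Y g (Suc k') \<omega>"
    show "k \<le> k'"
    proof (rule ccontr)
      assume "\<not> k \<le> k'"
      then have "jump_time n ta td Y g (Suc k') \<omega> \<le> jump_time n ta td Y g k \<omega>"
        by (intro monoD[OF mono]) simp
      with t \<open>t < jump_time n ta td Y g (Suc k') \<omega>\<close> show False by simp
    qed
  qed (use t in simp)
  then show ?thesis using t by (auto simp: Xproc_def Let_def)
qed

section \<open>The lumped process\<close>

locale jump_chain_construction = prob_space M for M :: "'w measure" +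
  fixes n :: nat and ta td :: real
    and eta :: "(real ^ ('N::finite)) measure"
    and rho :: "'N state measure"
    and Y :: "nat \<Rightarrow> 'w \<Rightarrow> 'N state"
    and \<gamma> :: "nat \<Rightarrow> 'w \<Rightarrow> real"
  assumes ta: "0 < ta" and td: "0 < td" and n: "0 < n"
    and eta: "prob_space eta" "sets eta = sets borel"
    and sets_rho: "sets rho = sets (Xspace n)"
    and chain: "markov_chain M (Xspace n) (mu n ta td eta) rho Y"
    and clock_exponential: "\<And>k. 1 \<le> k \<Longrightarrow> distributed M lborel (\<gamma> k) (exponential_density 1)"
    and clocks_indep: "indep_vars (\<lambda>_. borel) \<gamma> {1..}"
    and chain_clocks_indep: "\<And>A B. A \<in> sets (Pi\<^sub>M UNIV (\<lambda>_. Xspace n)) \<Longrightarrow>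
      B \<in> sets (Pi\<^sub>M {1..} (\<lambda>_. borel)) \<Longrightarrow>
      prob {\<omega> \<in> space M. (\<lambda>k. Y k \<omega>) \<in> A \<and> (\<lambda>k\<in>{1..}. \<gamma> k \<omega>) \<in> B}
      = prob {\<omega> \<in> space M. (\<lambda>k. Y k \<omega>) \<in> A} * prob {\<omega> \<in> space M. (\<lambda>k\<in>{1..}. \<gamma> k \<omega>) \<in> B}"
begin

abbreviation "J \<equiv> jump_time n ta td Y \<gamma>"
abbreviation "Xhat t \<omega> \<equiv> proj n (Xproc n ta td Y \<gamma> t \<omega>)"

lemma Y_measurable [measurable]: "Y k \<in> measurable M (Xspace n)"
  using chain unfolding markov_chain_def by auto

lemma Y_in_Xset: "\<omega> \<in> space M \<Longrightarrow> Y k \<omega> \<in> Xset n"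
  using measurable_space[OF Y_measurable] space_Xspace by blast

lemma prob_chain_step:
  assumes "\<And>j. B j \<in> sets (Xspace n)"
  shows "prob {\<omega> \<in> space M. \<forall>j\<le>Suc k. Y j \<omega> \<in> B j} =
    (\<integral>\<omega>. indicator {\<omega> \<in> space M. \<forall>j\<le>k. Y j \<omega> \<in> B j} \<omega> * mu n ta td eta (Y k \<omega>) (B (Suc k)) \<partial>M)"
  using chain assms unfolding markov_chain_def by blast

definition lumped_cylinder :: "nat \<Rightarrow> (nat \<Rightarrow> nat set) \<Rightarrow> 'w set" where
  "lumped_cylinder k C = {\<omega> \<in> space M. \<forall>j\<le>k. proj n (Y j \<omega>) \<in> C j}"

lemma lumped_cylinder_in_events [measurable]: "lumped_cylinder k C \<in> events"
  unfolding lumped_cylinder_def by measurable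

lemma prob_lumped_cylinder_Suc:
  assumes "\<And>\<omega>. \<omega> \<in> lumped_cylinder k C \<Longrightarrow> proj n (Y k \<omega>) = a"
  shows "prob (lumped_cylinder (Suc k) C) = prob (lumped_cylinder k C) * hat_mu n ta td a (C (Suc k))"
proof -
  define B where "B j = proj n -` C j \<inter> space (Xspace n :: 'N state measure)" for j
  have B: "B j \<in> sets (Xspace n)" for j unfolding B_def by measurable
  have cylinder: "lumped_cylinder k' C = {\<omega> \<in> space M. \<forall>j\<le>k'. Y j \<omega> \<in> B j}" for k'
    using Y_in_Xset by (auto simp: lumped_cylinder_def B_def space_Xspace)
  have "prob (lumped_cylinder (Suc k) C) =
      (\<integral>\<omega>. indicator (lumped_cylinder k C) \<omega> * mu n ta td eta (Y k \<omega>) (B (Suc k)) \<partial>M)"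
    unfolding cylinder by (rule prob_chain_step[OF B])
  also have "\<dots> = (\<integral>\<omega>. indicator (lumped_cylinder k C) \<omega> * hat_mu n ta td a (C (Suc k)) \<partial>M)"
    by (rule Bochner_Integration.integral_cong)
      (auto simp: B_def mu_lumpable[OF eta Y_in_Xset] assms split: split_indicator)
  also have "\<dots> = prob (lumped_cylinder k C) * hat_mu n ta td a (C (Suc k))"
    using lumped_cylinder_in_events[of k C] by (simp add: Int_absorb2 sets.sets_into_space)
  finally show ?thesis .
qed

lemma prob_lumped_path:
  "prob (lumped_cylinder k (\<lambda>j. {i j})) =
    prob {\<omega> \<in> space M. proj n (Y 0 \<omega>) = i 0} * (\<Prod>j<k. hat_mu n ta td (i j) {i (Suc j)})"
proof (induction k)
  case (Suc k)
  have "prob (lumped_cylinder (Suc k) (\<lambda>j. {i j})) =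
      prob (lumped_cylinder k (\<lambda>j. {i j})) * hat_mu n ta td (i k) {i (Suc k)}"
    by (rule prob_lumped_cylinder_Suc) (auto simp: lumped_cylinder_def)
  then show ?case using Suc by simp
qed (simp add: lumped_cylinder_def)

lemma AE_lumped_chain_moves: "AE \<omega> in M. \<forall>k. proj n (Y (Suc k) \<omega>) \<noteq> proj n (Y k \<omega>)"
proof -
  define C where "C k m j = (if k \<le> j then {m} else UNIV)" for k m j :: nat
  have "lumped_cylinder (Suc k) (C k m) \<in> null_sets M" for k m
  proof -
    have "prob (lumped_cylinder (Suc k) (C k m)) =
        prob (lumped_cylinder k (C k m)) * hat_mu n ta td m (C k m (Suc k))"
      by (rule prob_lumped_cylinder_Suc) (auto simp: lumped_cylinder_def C_def)
    then show ?thesis by (simp add: C_def hat_mu_self null_sets_def emeasure_eq_measure)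
  qed
  then have "AE \<omega> in M. \<forall>k m. \<omega> \<notin> lumped_cylinder (Suc k) (C k m)"
    by (simp add: AE_all_countable AE_not_in)
  with AE_space show ?thesis
  proof eventually_elim
    case (elim \<omega>)
    have "\<omega> \<in> lumped_cylinder (Suc k) (C k (proj n (Y k \<omega>)))"
      if "proj n (Y (Suc k) \<omega>) = proj n (Y k \<omega>)" for k
      using elim that by (auto simp: lumped_cylinder_def C_def le_Suc_eq)
    then show ?case using elim by blast
  qed
qed

lemma lumped_initial_law:
  assumes "a \<in> {0..n}"
  shows "measure (distr rho (count_space {0..n}) (proj n)) {a} = prob {\<omega> \<in> space M. proj n (Y 0 \<omega>) = a}"
proof -
  have rho: "rho = distr M (Xspace n) (Y 0)" using chain unfolding markov_chain_def by simp
  have proj: "proj n \<in> measurable (Xspace n) (count_space {0..n})"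
    using proj_le by (auto simp: measurable_count_space_eq2)
  have "measure (distr rho (count_space {0..n}) (proj n)) {a} = measure rho (proj n -` {a} \<inter> space rho)"
    using assms proj by (intro measure_distr) (auto simp: measurable_cong_sets[OF sets_rho refl])
  also have "\<dots> = prob (Y 0 -` (proj n -` {a} \<inter> space (Xspace n)) \<inter> space M)"
    unfolding sets_eq_imp_space_eq[OF sets_rho] by (subst rho) (intro measure_distr; measurable)
  also have "Y 0 -` (proj n -` {a} \<inter> space (Xspace n)) \<inter> space M = {\<omega> \<in> space M. proj n (Y 0 \<omega>) = a}"
    using Y_in_Xset by (auto simp: space_Xspace)
  finally show ?thesis .
qed

lemma clock_measurable: "1 \<le> k \<Longrightarrow> \<gamma> k \<in> borel_measurable M"
  using distributed_measurable[OF clock_exponential] by simp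

lemma clock_Suc_measurable [measurable]: "\<gamma> (Suc k) \<in> borel_measurable M"
  by (simp add: clock_measurable)

lemma prob_clock_gt:
  assumes "1 \<le> k" "0 \<le> a"
  shows "prob {\<omega> \<in> space M. a < \<gamma> k \<omega>} = exp (- a)"
  using exponential_distributedD_gt[OF clock_exponential[OF assms(1)] assms(2)] by simp

lemma prob_clock_le:
  assumes "1 \<le> k" "0 \<le> a"
  shows "prob {\<omega> \<in> space M. \<gamma> k \<omega> \<le> a} = 1 - exp (- a)"
  using exponential_distributedD_le[OF clock_exponential[OF assms(1)] assms(2)] by simp

lemma prob_clocks_indep:
  assumes "finite I" "I \<subseteq> {1..}" "\<And>j. j \<in> I \<Longrightarrow> A j \<in> sets borel"
  shows "prob {\<omega> \<in> space M. \<forall>j\<in>I. \<gamma> j \<omega> \<in> A j} = (\<Prod>j\<in>I. prob {\<omega> \<in> space M. \<gamma> j \<omega> \<in> A j})"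
proof (cases "I = {}")
  case False
  have "indep_sets (\<lambda>i. {\<gamma> i -` A \<inter> space M | A. A \<in> sets borel}) {1..}"
    using clocks_indep unfolding indep_vars_def2 by simp
  moreover have "(\<lambda>j. \<gamma> j -` A j \<inter> space M) \<in> Pi I (\<lambda>i. {\<gamma> i -` A \<inter> space M | A. A \<in> sets borel})"
    using assms(3) by blast
  ultimately have "prob (\<Inter>j\<in>I. \<gamma> j -` A j \<inter> space M) = (\<Prod>j\<in>I. prob (\<gamma> j -` A j \<inter> space M))"
    using assms(1,2) False unfolding indep_sets_def by blast
  moreover have "{\<omega> \<in> space M. \<forall>j\<in>I. \<gamma> j \<omega> \<in> A j} = (\<Inter>j\<in>I. \<gamma> j -` A j \<inter> space M)"
    using False by auto
  moreover have "{\<omega> \<in> space M. \<gamma> j \<omega> \<in> A j} = \<gamma> j -` A j \<inter> space M" for j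
    by auto
  ultimately show ?thesis by simp
qed (simp add: prob_space)

lemma AE_clocks_pos: "AE \<omega> in M. \<forall>k\<ge>1. 0 < \<gamma> k \<omega>"
proof -
  have "AE \<omega> in M. 1 \<le> k \<longrightarrow> 0 < \<gamma> k \<omega>" for k
  proof (cases "1 \<le> k")
    case True
    have "prob {\<omega> \<in> space M. 0 < \<gamma> k \<omega>} = 1" using prob_clock_gt[OF True] by simp
    then have "AE \<omega> in M. \<omega> \<in> {\<omega> \<in> space M. 0 < \<gamma> k \<omega>}" by (rule AE_prob_1)
    then show ?thesis by eventually_elim auto
  qed simp
  then show ?thesis by (simp add: AE_all_countable)
qed

text \<open>By independence, the clocks with indices in a window of length \<open>K\<close> all stay below \<open>1\<close>
  with probability \<open>(1 - exp (-1))^K\<close>.\<close>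

lemma AE_clocks_frequently_gt_1: "AE \<omega> in M. \<forall>m. \<exists>i>m. 1 < \<gamma> i \<omega>"
proof -
  define q :: real where "q = 1 - exp (- 1)"
  have "{\<omega> \<in> space M. \<forall>i\<in>{Suc m..}. \<gamma> i \<omega> \<le> 1} \<in> null_sets M" for m
  proof -
    let ?N = "{\<omega> \<in> space M. \<forall>i\<in>{Suc m..}. \<gamma> i \<omega> \<le> 1}"
    have N: "?N \<in> events"
      by (intro sets.sets_Collect_countable_All' borel_measurable_le clock_measurable) auto
    have "prob ?N \<le> q ^ K" for K
    proof -
      let ?I = "{Suc m..<Suc m + K}"
      have "prob ?N \<le> prob {\<omega> \<in> space M. \<forall>i\<in>?I. \<gamma> i \<omega> \<in> {..1}}"
        by (intro finite_measure_mono) (auto intro!: sets.sets_Collect_finite_All borel_measurable_le clock_measurable)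
      also have "\<dots> = (\<Prod>i\<in>?I. prob {\<omega> \<in> space M. \<gamma> i \<omega> \<in> {..1}})"
        by (rule prob_clocks_indep) auto
      also have "\<dots> = (\<Prod>i\<in>?I. q)"
        by (intro prod.cong refl) (simp add: prob_clock_le q_def)
      finally show ?thesis by simp
    qed
    moreover have "(\<lambda>K. q ^ K) \<longlonglongrightarrow> 0"
      by (rule LIMSEQ_power_zero) (simp add: q_def)
    ultimately have "prob ?N \<le> 0"
      by (intro tendsto_le[OF _ _ tendsto_const]) auto
    then show ?thesis
      using N measure_nonneg[of M ?N] by (simp add: null_sets_def emeasure_eq_measure)
  qed
  then have "AE \<omega> in M. \<forall>m. \<omega> \<notin> {\<omega> \<in> space M. \<forall>i\<in>{Suc m..}. \<gamma> i \<omega> \<le> 1}"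
    by (subst AE_all_countable) (blast intro: AE_not_in)
  with AE_space show ?thesis
    by eventually_elim (fastforce simp: not_le Suc_le_eq)
qed

lemma prob_clocks_exceed:
  assumes "\<And>j. 0 \<le> a j"
  shows "prob {\<omega> \<in> space M. \<forall>j<k. a j < \<gamma> (Suc j) \<omega>} = (\<Prod>j<k. exp (- a j))"
proof -
  have "{\<omega> \<in> space M. \<forall>j<k. a j < \<gamma> (Suc j) \<omega>} =
      {\<omega> \<in> space M. \<forall>j\<in>Suc ` {..<k}. \<gamma> j \<omega> \<in> {a (j - 1)<..}}"
    by auto
  also have "prob \<dots> = (\<Prod>j\<in>Suc ` {..<k}. prob {\<omega> \<in> space M. \<gamma> j \<omega> \<in> {a (j - 1)<..}})"
    by (rule prob_clocks_indep) auto
  also have "\<dots> = (\<Prod>j<k. prob {\<omega> \<in> space M. a j < \<gamma> (Suc j) \<omega>})"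
    by (simp add: prod.reindex)
  also have "\<dots> = (\<Prod>j<k. exp (- a j))"
    using assms by (intro prod.cong refl) (simp add: prob_clock_gt)
  finally show ?thesis .
qed

lemma prob_lumped_cylinder_clocks:
  assumes "\<And>j. 0 \<le> a j"
  shows "prob (lumped_cylinder k C \<inter> {\<omega> \<in> space M. \<forall>j<k. a j < \<gamma> (Suc j) \<omega>}) =
    prob (lumped_cylinder k C) * (\<Prod>j<k. exp (- a j))"
proof -
  define A where
    "A = {y \<in> space (Pi\<^sub>M UNIV (\<lambda>_. Xspace n :: 'N state measure)). \<forall>j\<le>k. proj n (y j) \<in> C j}"
  define B where "B = {g \<in> space (Pi\<^sub>M {1..} (\<lambda>_. borel)). \<forall>j<k. a j < g (Suc j)}"
  have A: "A \<in> sets (Pi\<^sub>M UNIV (\<lambda>_. Xspace n))" unfolding A_def by measurable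
  have B: "B \<in> sets (Pi\<^sub>M {1..} (\<lambda>_. borel))" unfolding B_def by measurable
  have Y_path: "(\<lambda>k. Y k \<omega>) \<in> space (Pi\<^sub>M UNIV (\<lambda>_. Xspace n))" if "\<omega> \<in> space M" for \<omega>
    using Y_in_Xset[OF that] by (simp add: space_PiM space_Xspace PiE_iff)
  have clock_path: "(\<lambda>k\<in>{1..}. \<gamma> k \<omega>) \<in> space (Pi\<^sub>M {1..} (\<lambda>_. borel))" for \<omega>
    by (simp add: space_PiM)
  have "{\<omega> \<in> space M. (\<lambda>k. Y k \<omega>) \<in> A \<and> (\<lambda>k\<in>{1..}. \<gamma> k \<omega>) \<in> B} =
      lumped_cylinder k C \<inter> {\<omega> \<in> space M. \<forall>j<k. a j < \<gamma> (Suc j) \<omega>}"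
    "{\<omega> \<in> space M. (\<lambda>k. Y k \<omega>) \<in> A} = lumped_cylinder k C"
    "{\<omega> \<in> space M. (\<lambda>k\<in>{1..}. \<gamma> k \<omega>) \<in> B} = {\<omega> \<in> space M. \<forall>j<k. a j < \<gamma> (Suc j) \<omega>}"
    using Y_path clock_path by (auto simp: lumped_cylinder_def A_def B_def)
  with chain_clocks_indep[OF A B] show ?thesis
    by (simp add: prob_clocks_exceed[OF assms])
qed

lemma jump_time_measurable [measurable]: "J k \<in> borel_measurable M"
proof (induction k)
  case (Suc k)
  have "(\<lambda>\<omega>. rate_c n ta td (fst (Y k \<omega>))) \<in> borel_measurable M"
    unfolding rate_c_eq_hat_c proj_def[symmetric] by measurable
  with Suc show ?case
    unfolding jump_time_Suc[abs_def] by measurable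
qed (simp add: jump_time_def[abs_def])

lemma measurable_Xhat_at:
  assumes [measurable]: "T \<in> borel_measurable M"
  shows "(\<lambda>\<omega>. Xhat (T \<omega>) \<omega>) \<in> measurable M (count_space UNIV)"
proof -
  have index: "{\<omega> \<in> space M. T \<omega> < J (Suc k) \<omega>} \<in> events" for k
    by measurable
  have "(\<lambda>\<omega>. LEAST k. T \<omega> < J (Suc k) \<omega>) \<in> measurable M (count_space UNIV)"
    using index by (intro measurable_Least) (simp add: pred_def)
  then have "(\<lambda>\<omega>. proj n (Y (LEAST k. T \<omega> < J (Suc k) \<omega>) \<omega>)) \<in> measurable M (count_space UNIV)"
    by (rule measurable_compose_countable[where f = "\<lambda>k \<omega>. proj n (Y k \<omega>)", rotated]) measurable
  moreover have "{\<omega> \<in> space M. \<exists>k. T \<omega> < J (Suc k) \<omega>} \<in> events"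
    using index by (rule sets.sets_Collect_countable_Ex)
  ultimately show ?thesis
    unfolding Xproc_def Let_def if_distrib[of "proj n"] by (intro measurable_If) measurable
qed

lemma AE_regular_jumps:
  "AE \<omega> in M. strict_mono (\<lambda>k. J k \<omega>) \<and> filterlim (\<lambda>k. J k \<omega>) at_top sequentially \<and>
    (\<forall>k. proj n (Y (Suc k) \<omega>) \<noteq> proj n (Y k \<omega>))"
  using AE_clocks_pos AE_clocks_frequently_gt_1 AE_lumped_chain_moves
  by eventually_elim (simp add: jump_time_strict_mono_unbounded[OF ta td n])

lemma Xhat_at_jump_time:
  assumes "strict_mono (\<lambda>k. J k \<omega>)"
  shows "Xhat (J k \<omega>) \<omega> = proj n (Y k \<omega>)"
proof -
  have "Xproc n ta td Y \<gamma> (J k \<omega>) \<omega> = Y k \<omega>"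
    using strict_monoD[OF assms, of k "Suc k"]
    by (intro Xproc_eq_between_jumps[OF strict_mono_mono[OF assms]]) auto
  then show ?thesis by simp
qed

lemma AE_Xhat_jump_structure:
  "AE \<omega> in M. J 0 \<omega> = 0 \<and> (\<forall>k. J k \<omega> < J (Suc k) \<omega>) \<and>
    filterlim (\<lambda>k. J k \<omega>) at_top sequentially \<and>
    (\<forall>k t. J k \<omega> \<le> t \<and> t < J (Suc k) \<omega> \<longrightarrow> Xhat t \<omega> = Xhat (J k \<omega>) \<omega>) \<and>
    (\<forall>k. Xhat (J (Suc k) \<omega>) \<omega> \<noteq> Xhat (J k \<omega>) \<omega>)"
  using AE_regular_jumps
proof eventually_elim
  case (elim \<omega>)
  then have mono: "strict_mono (\<lambda>k. J k \<omega>)" by simp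
  have "Xhat t \<omega> = Xhat (J k \<omega>) \<omega>" if "J k \<omega> \<le> t" "t < J (Suc k) \<omega>" for k t
    using Xproc_eq_between_jumps[OF strict_mono_mono[OF mono] that] Xhat_at_jump_time[OF mono]
    by simp
  with elim show ?case
    by (simp add: Xhat_at_jump_time[OF mono] strict_mono_Suc_iff)
qed

lemma holding_time_eq: "J (Suc j) \<omega> - J j \<omega> = \<gamma> (Suc j) \<omega> / hat_c n ta td (proj n (Y j \<omega>))"
  by (simp add: jump_time_Suc rate_c_eq_hat_c proj_def)

lemma prob_jump_chain_holding_times:
  assumes i: "\<forall>j\<le>k. i j \<in> {0..n}" and s: "\<forall>j. 0 \<le> s j"
  shows "prob {\<omega> \<in> space M. (\<forall>j\<le>k. Xhat (J j \<omega>) \<omega> = i j) \<and> (\<forall>j<k. J (Suc j) \<omega> - J j \<omega> > s j)}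
    = measure (distr rho (count_space {0..n}) (proj n)) {i 0} *
      (\<Prod>j<k. (hat_alpha n ta td (i j) {i (Suc j)} / hat_alpha n ta td (i j) {0..n}) *
        exp (- hat_alpha n ta td (i j) {0..n} * s j))"
proof -
  define c where "c j = hat_c n ta td (i j)" for j
  have c: "0 < c j" for j using hat_c_pos[OF n ta td] by (simp add: c_def)
  let ?E = "{\<omega> \<in> space M. (\<forall>j\<le>k. Xhat (J j \<omega>) \<omega> = i j) \<and> (\<forall>j<k. J (Suc j) \<omega> - J j \<omega> > s j)}"
  let ?G = "{\<omega> \<in> space M. \<forall>j<k. c j * s j < \<gamma> (Suc j) \<omega>}"
  have "AE \<omega> in M. \<omega> \<in> ?E \<longleftrightarrow> \<omega> \<in> lumped_cylinder k (\<lambda>j. {i j}) \<inter> ?G"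
    using AE_regular_jumps
  proof eventually_elim
    case (elim \<omega>)
    have holding: "s j < J (Suc j) \<omega> - J j \<omega> \<longleftrightarrow> c j * s j < \<gamma> (Suc j) \<omega>"
      if "proj n (Y j \<omega>) = i j" for j
      using that c[of j] by (simp add: holding_time_eq c_def pos_less_divide_eq mult.commute)
    have "\<omega> \<in> ?E \<longleftrightarrow> \<omega> \<in> space M \<and> (\<forall>j\<le>k. proj n (Y j \<omega>) = i j) \<and> (\<forall>j<k. s j < J (Suc j) \<omega> - J j \<omega>)"
      using elim by (simp add: Xhat_at_jump_time)
    also have "\<dots> \<longleftrightarrow> \<omega> \<in> lumped_cylinder k (\<lambda>j. {i j}) \<inter> ?G"
      using holding unfolding lumped_cylinder_def by auto
    finally show ?case .
  qed
  moreover have "?E \<in> events"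
  proof -
    have [measurable]: "(\<lambda>\<omega>. Xhat (J j \<omega>) \<omega>) \<in> measurable M (count_space UNIV)" for j
      by (rule measurable_Xhat_at) measurable
    show ?thesis by measurable
  qed
  ultimately have "prob ?E = prob (lumped_cylinder k (\<lambda>j. {i j}) \<inter> ?G)"
    by (rule measure_eq_AE) measurable
  also have "\<dots> = prob (lumped_cylinder k (\<lambda>j. {i j})) * (\<Prod>j<k. exp (- (c j * s j)))"
    using c s by (intro prob_lumped_cylinder_clocks) (simp add: less_imp_le)
  also have "\<dots> = measure (distr rho (count_space {0..n}) (proj n)) {i 0} *
      (\<Prod>j<k. hat_mu n ta td (i j) {i (Suc j)} * exp (- (c j * s j)))"
    using i by (simp add: prob_lumped_path lumped_initial_law prod.distrib)
  also have "\<dots> = measure (distr rho (count_space {0..n}) (proj n)) {i 0} *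
      (\<Prod>j<k. (hat_alpha n ta td (i j) {i (Suc j)} / hat_alpha n ta td (i j) {0..n}) *
        exp (- hat_alpha n ta td (i j) {0..n} * s j))"
    using i by (intro arg_cong2[where f = "(*)"] refl prod.cong)
      (auto simp: hat_alpha_def hat_mu_total[OF n ta td] c_def hat_c_pos[OF n ta td, THEN less_imp_not_eq2])
  finally show ?thesis .
qed

end

theorem proposition4:
  fixes n :: nat and ta td :: real
    and eta :: "(real ^ 'N) measure"
    and rho :: "'N state measure"
    and M :: "'w measure"
    and Y :: "nat \<Rightarrow> 'w \<Rightarrow> 'N state"
    and \<gamma> :: "nat \<Rightarrow> 'w \<Rightarrow> real"
  assumes "0 < ta" and "0 < td" and "0 < n"
    and "prob_space eta" and "sets eta = sets borel" and "integrable eta (\<lambda>x. x)"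
    and "prob_space rho" and "sets rho = sets (Xspace n)"
    and "prob_space M"
    and "markov_chain M (Xspace n) (mu n ta td eta) rho Y"
    and "\<And>k. 1 \<le> k \<Longrightarrow> distributed M lborel (\<gamma> k) (exponential_density 1)"
    and "prob_space.indep_vars M (\<lambda>_. borel) \<gamma> {1..}"
    and "\<And>A B. A \<in> sets (Pi\<^sub>M UNIV (\<lambda>_. Xspace n)) \<Longrightarrow> B \<in> sets (Pi\<^sub>M {1..} (\<lambda>_. borel)) \<Longrightarrow>
           measure M {\<omega> \<in> space M. (\<lambda>k. Y k \<omega>) \<in> A \<and> (\<lambda>k\<in>{1..}. \<gamma> k \<omega>) \<in> B}
           = measure M {\<omega> \<in> space M. (\<lambda>k. Y k \<omega>) \<in> A} * measure M {\<omega> \<in> space M. (\<lambda>k\<in>{1..}. \<gamma> k \<omega>) \<in> B}"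
  shows "pure_jump_markov M (\<lambda>t \<omega>. proj n (Xproc n ta td Y \<gamma> t \<omega>)) {0..n}
           (hat_alpha n ta td) (distr rho (count_space {0..n}) (proj n))"
proof -
  interpret jump_chain_construction M n ta td eta rho Y \<gamma>
    by (rule jump_chain_construction.intro[OF assms(9)] jump_chain_construction_axioms.intro)+
      (rule assms; assumption)+
  have "\<forall>t\<ge>0. (\<lambda>\<omega>. Xhat t \<omega>) \<in> measurable M (count_space {0..n})"
    using measurable_Xhat_at[of "\<lambda>_. t" for t]
    by (auto simp: measurable_count_space_eq2 proj_le)
  then show ?thesis
    unfolding pure_jump_markov_def
    using prob_space_axioms jump_time_measurable AE_Xhat_jump_structure prob_jump_chain_holding_times
    by blast
qed

end
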